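(* Let $\mathcal{P}$ be a collection of cells with maximal rectangles $\mathcal{B}_1,\dots,\mathcal{B}_p$. Then there exists $i\in[p]$ such that $\overline{\mathcal{B}_i}=\mathcal{B}_i\setminus\bigcup_{j\in[p]\setminus\{i\}}\mathcal{B}_j\neq\emptyset$.
   Context: A cell is $[a,a+(1,1)]\subset\mathbb{R}^2$ with $a\in\mathbb{Z}^2$ its lower left corner; a collection of cells is a non-empty finite set of cells. For lower left corners $a\le b$ (componentwise), the rectangle $[A,B]$ is the set of cells whose lower left corner $c$ satisfies $a\le c\le b$. A maximal rectangle of $\mathcal{P}$ is a rectangle all of whose cells lie in $\mathcal{P}$ and not properly contained in another such rectangle. *)

theory Defs
  imports Main
begin

text \<open>A cell is identified with its lower left corner, a point of int x int.
  A collection of cells is a non-empty finite set of such corners.\<close>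

definition corner_le :: "int \<times> int \<Rightarrow> int \<times> int \<Rightarrow> bool" where
  "corner_le a b \<longleftrightarrow> fst a \<le> fst b \<and> snd a \<le> snd b"

definition cell_rect :: "int \<times> int \<Rightarrow> int \<times> int \<Rightarrow> (int \<times> int) set" where
  "cell_rect a b = {c. corner_le a c \<and> corner_le c b}"

definition is_rectangle :: "(int \<times> int) set \<Rightarrow> bool" where
  "is_rectangle R \<longleftrightarrow> (\<exists>a b. corner_le a b \<and> R = cell_rect a b)"

definition maximal_rectangle :: "(int \<times> int) set \<Rightarrow> (int \<times> int) set \<Rightarrow> bool" where
  "maximal_rectangle P R \<longleftrightarrow> is_rectangle R \<and> R \<subseteq> P \<and>
     \<not> (\<exists>R'. is_rectangle R' \<and> R' \<subseteq> P \<and> R \<subset> R')"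

end

theory Submission
  imports Defs
begin

text \<open>Take the leftmost column of \<open>\<P>\<close>, a maximal vertical run \<open>[l,h]\<close> of cells in it,
  and widen the strip \<open>[l,h]\<close> to the right as far as possible, up to column \<open>x\<^sub>1\<close>.
  Some row \<open>y\<close> of the strip is blocked in column \<open>x\<^sub>1 + 1\<close>. Every rectangle of \<open>\<P>\<close>
  through the cell \<open>(x\<^sub>0, y)\<close> starts in the leftmost column, so it is confined to the run
  vertically and to column \<open>x\<^sub>1\<close> horizontally: it lies in the widened strip. Hence the
  strip is a maximal rectangle and the only one containing \<open>(x\<^sub>0, y)\<close>.\<close>

lemma mem_cell_rect [simp]:
  "(p1, p2) \<in> cell_rect (a1, a2) (b1, b2) \<longleftrightarrow> a1 \<le> p1 \<and> p1 \<le> b1 \<and> a2 \<le> p2 \<and> p2 \<le> b2"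
  by (auto simp: cell_rect_def corner_le_def)

lemma is_rectangle_cell_rect:
  "a1 \<le> b1 \<Longrightarrow> a2 \<le> b2 \<Longrightarrow> is_rectangle (cell_rect (a1, a2) (b1, b2))"
  unfolding is_rectangle_def corner_le_def by force

lemma unique_maximal_rectangle_through:
  assumes "is_rectangle B" "B \<subseteq> P" "c \<in> B"
    and through_c: "\<And>R. is_rectangle R \<Longrightarrow> R \<subseteq> P \<Longrightarrow> c \<in> R \<Longrightarrow> R \<subseteq> B"
  shows "maximal_rectangle P B"
    and "c \<notin> \<Union>{B'. maximal_rectangle P B' \<and> B' \<noteq> B}"
proof -
  show "maximal_rectangle P B"
    unfolding maximal_rectangle_def using assms by blast
  show "c \<notin> \<Union>{B'. maximal_rectangle P B' \<and> B' \<noteq> B}"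
  proof
    assume "c \<in> \<Union>{B'. maximal_rectangle P B' \<and> B' \<noteq> B}"
    then obtain B' where B': "maximal_rectangle P B'" "B' \<noteq> B" "c \<in> B'" by blast
    then have "B' \<subseteq> B" using through_c unfolding maximal_rectangle_def by blast
    with B' assms show False unfolding maximal_rectangle_def by blast
  qed
qed

lemma int_exists_last_above:
  fixes k :: int
  assumes "Q k" and "finite {n. k \<le> n \<and> Q n}"
  shows "\<exists>n\<ge>k. Q n \<and> \<not> Q (n + 1)"
proof -
  define n where "n = Max {n. k \<le> n \<and> Q n}"
  have "k \<le> n \<and> Q n" unfolding n_def using Max_in assms by blast
  moreover have "\<not> Q (n + 1)"
    using Max_ge[OF assms(2), of "n + 1"] \<open>k \<le> n \<and> Q n\<close> unfolding n_def by fastforce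
  ultimately show ?thesis by blast
qed

lemma int_exists_first_below:
  fixes k :: int
  assumes "Q k" and "finite {n. n \<le> k \<and> Q n}"
  shows "\<exists>n\<le>k. Q n \<and> \<not> Q (n - 1)"
proof -
  have "{n. - k \<le> n \<and> Q (- n)} \<subseteq> uminus ` {n. n \<le> k \<and> Q n}"
    by (auto intro: image_eqI[of _ uminus "- n" for n])
  then have "finite {n. - k \<le> n \<and> Q (- n)}"
    using assms(2) finite_surj by blast
  then obtain n where "- k \<le> n" "Q (- n)" "\<not> Q (- (n + 1))"
    using int_exists_last_above[of "\<lambda>n. Q (- n)" "- k"] assms(1) by auto
  then show ?thesis by (intro exI[of _ "- n"]) auto
qed

lemma finite_int_set_maximal_interval:
  fixes S :: "int set"
  assumes "finite S" and "y \<in> S"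
  shows "\<exists>l h. l \<le> y \<and> y \<le> h \<and> {l..h} \<subseteq> S \<and> l - 1 \<notin> S \<and> h + 1 \<notin> S"
proof -
  have "{h. y \<le> h \<and> {y..h} \<subseteq> S} \<subseteq> S" "{l. l \<le> y \<and> {l..y} \<subseteq> S} \<subseteq> S"
    by auto
  then have "finite {h. y \<le> h \<and> {y..h} \<subseteq> S}" "finite {l. l \<le> y \<and> {l..y} \<subseteq> S}"
    using assms(1) finite_subset by blast+
  then obtain h l where "y \<le> h" "{y..h} \<subseteq> S" "\<not> {y..h + 1} \<subseteq> S"
    and "l \<le> y" "{l..y} \<subseteq> S" "\<not> {l - 1..y} \<subseteq> S"
    using int_exists_last_above[of "\<lambda>h. {y..h} \<subseteq> S" y]
      int_exists_first_below[of "\<lambda>l. {l..y} \<subseteq> S" y] assms(2) by auto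
  moreover have "{y..h + 1} = insert (h + 1) {y..h}" "{l - 1..y} = insert (l - 1) {l..y}"
    using \<open>y \<le> h\<close> \<open>l \<le> y\<close> by auto
  ultimately have "h + 1 \<notin> S" "l - 1 \<notin> S" by simp_all
  moreover have "{l..h} \<subseteq> S"
    using \<open>{l..y} \<subseteq> S\<close> \<open>{y..h} \<subseteq> S\<close> by fastforce
  ultimately show ?thesis using \<open>l \<le> y\<close> \<open>y \<le> h\<close> by blast
qed

lemma maximal_vertical_run:
  fixes P :: "(int \<times> int) set"
  assumes "finite P" and "(x, y) \<in> P"
  shows "\<exists>l h. l \<le> y \<and> y \<le> h \<and> cell_rect (x, l) (x, h) \<subseteq> P \<and>
    (x, l - 1) \<notin> P \<and> (x, h + 1) \<notin> P"
proof -
  define S where "S = {t. (x, t) \<in> P}"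
  have "finite S"
    using finite_vimageI[OF assms(1), of "Pair x"] by (simp add: S_def vimage_def inj_def)
  moreover have "y \<in> S" using assms(2) by (simp add: S_def)
  ultimately obtain l h where "l \<le> y" "y \<le> h" "{l..h} \<subseteq> S" "l - 1 \<notin> S" "h + 1 \<notin> S"
    using finite_int_set_maximal_interval[of S y] by blast
  moreover have "cell_rect (x, l) (x, h) \<subseteq> P"
  proof
    fix p assume "p \<in> cell_rect (x, l) (x, h)"
    then obtain t where "p = (x, t)" "t \<in> {l..h}" by (cases p) auto
    with \<open>{l..h} \<subseteq> S\<close> show "p \<in> P" by (auto simp: S_def)
  qed
  ultimately show ?thesis unfolding S_def by blast
qed

lemma maximal_horizontal_extension:
  fixes P :: "(int \<times> int) set"
  assumes "finite P" and "l \<le> h" and "cell_rect (x0, l) (x0, h) \<subseteq> P"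
  shows "\<exists>x1\<ge>x0. cell_rect (x0, l) (x1, h) \<subseteq> P \<and> (\<exists>y. l \<le> y \<and> y \<le> h \<and> (x1 + 1, y) \<notin> P)"
proof -
  have "finite {x. x0 \<le> x \<and> cell_rect (x0, l) (x, h) \<subseteq> P}"
  proof (rule finite_subset[OF _ finite_imageI[OF assms(1), of fst]])
    show "{x. x0 \<le> x \<and> cell_rect (x0, l) (x, h) \<subseteq> P} \<subseteq> fst ` P"
      using assms(2) by (force simp: image_iff subset_iff)
  qed
  then obtain x1 where x1: "x0 \<le> x1" "cell_rect (x0, l) (x1, h) \<subseteq> P"
    and not_wider: "\<not> cell_rect (x0, l) (x1 + 1, h) \<subseteq> P"
    using int_exists_last_above[of "\<lambda>x. cell_rect (x0, l) (x, h) \<subseteq> P" x0] assms(3) by blast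
  have "\<exists>y. l \<le> y \<and> y \<le> h \<and> (x1 + 1, y) \<notin> P"
  proof (rule ccontr)
    assume column_full: "\<not> (\<exists>y. l \<le> y \<and> y \<le> h \<and> (x1 + 1, y) \<notin> P)"
    have "cell_rect (x0, l) (x1 + 1, h) \<subseteq> P"
    proof
      fix p assume "p \<in> cell_rect (x0, l) (x1 + 1, h)"
      then obtain a b where "p = (a, b)" "x0 \<le> a" "a \<le> x1 + 1" "l \<le> b" "b \<le> h"
        by (cases p) auto
      with column_full x1(2) show "p \<in> P" by (cases "a = x1 + 1") auto
    qed
    with not_wider show False ..
  qed
  with x1 show ?thesis by blast
qed

lemma rectangle_through_leftmost_blocked_cell:
  fixes P :: "(int \<times> int) set"
  assumes leftmost: "\<And>p. p \<in> P \<Longrightarrow> x0 \<le> fst p"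
    and below: "(x0, l - 1) \<notin> P" and above: "(x0, h + 1) \<notin> P"
    and "l \<le> y" "y \<le> h" and right: "(x1 + 1, y) \<notin> P" and "x0 \<le> x1"
    and R: "is_rectangle R" "R \<subseteq> P" "(x0, y) \<in> R"
  shows "R \<subseteq> cell_rect (x0, l) (x1, h)"
proof -
  obtain a1 a2 b1 b2 where R_eq: "R = cell_rect (a1, a2) (b1, b2)" "a1 \<le> b1" "a2 \<le> b2"
    using R(1) unfolding is_rectangle_def corner_le_def by auto
  with R(3) have "a1 \<le> x0" "x0 \<le> b1" "a2 \<le> y" "y \<le> b2" by auto
  have "(a1, a2) \<in> P" using R(2) R_eq by auto
  with leftmost \<open>a1 \<le> x0\<close> have "a1 = x0" by fastforce
  txt \<open>Otherwise \<open>R\<close> would contain one of the three blocked cells.\<close>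
  have "\<not> a2 < l"
    using below R(2) \<open>a1 \<le> x0\<close> \<open>x0 \<le> b1\<close> \<open>y \<le> b2\<close> \<open>l \<le> y\<close> unfolding R_eq by force
  moreover have "\<not> h < b2"
    using above R(2) \<open>a1 \<le> x0\<close> \<open>x0 \<le> b1\<close> \<open>a2 \<le> y\<close> \<open>y \<le> h\<close> unfolding R_eq by force
  moreover have "\<not> x1 < b1"
    using right R(2) \<open>a1 \<le> x0\<close> \<open>x0 \<le> x1\<close> \<open>a2 \<le> y\<close> \<open>y \<le> b2\<close> unfolding R_eq by force
  ultimately show ?thesis using \<open>a1 = x0\<close> unfolding R_eq by auto
qed

theorem proposition2p6:
  fixes P :: "(int \<times> int) set"
  assumes "finite P" and "P \<noteq> {}"
  shows "\<exists>B. maximal_rectangle P B \<and>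
           B - \<Union>{B'. maximal_rectangle P B' \<and> B' \<noteq> B} \<noteq> {}"
proof -
  define x0 where "x0 = Min (fst ` P)"
  have leftmost: "\<And>p. p \<in> P \<Longrightarrow> x0 \<le> fst p" unfolding x0_def using assms by auto
  have "x0 \<in> fst ` P" unfolding x0_def using assms by simp
  then obtain y0 where "(x0, y0) \<in> P" by force
  then obtain l h where "l \<le> y0" "y0 \<le> h" "cell_rect (x0, l) (x0, h) \<subseteq> P"
    and below: "(x0, l - 1) \<notin> P" and above: "(x0, h + 1) \<notin> P"
    using maximal_vertical_run[OF assms(1)] by blast
  moreover from this have "l \<le> h" by linarith
  ultimately obtain x1 y where "x0 \<le> x1" and B_in_P: "cell_rect (x0, l) (x1, h) \<subseteq> P"
    and "l \<le> y" "y \<le> h" and right: "(x1 + 1, y) \<notin> P"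
    using maximal_horizontal_extension[OF assms(1)] by blast
  let ?B = "cell_rect (x0, l) (x1, h)"
  have "is_rectangle ?B" "(x0, y) \<in> ?B"
    using \<open>x0 \<le> x1\<close> \<open>l \<le> h\<close> \<open>l \<le> y\<close> \<open>y \<le> h\<close> by (auto intro: is_rectangle_cell_rect)
  from unique_maximal_rectangle_through[OF this(1) B_in_P this(2)
      rectangle_through_leftmost_blocked_cell[OF leftmost below above \<open>l \<le> y\<close> \<open>y \<le> h\<close> right \<open>x0 \<le> x1\<close>]]
  show ?thesis using \<open>(x0, y) \<in> ?B\<close> by blast
qed

end
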